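(* Let $\{S_1,\dots,S_N\}$ be an IFS of contracting similitudes of $\mathbb R^d$, ordered by $1\prec2\prec\cdots\prec N$. Then it is a linear IFS if and only if $S_{i+1}(\mathrm{Fix}(S_1))=S_i(\mathrm{Fix}(S_N))$ for all $i=1,\dots,N-1$, where $\mathrm{Fix}(S)$ denotes the unique fixed point of $S$.
   Context: Let $K$ be the invariant set of the IFS, i.e. the unique nonempty compact set with $K=\bigcup_{j=1}^N S_j(K)$. For a word $i_1\dots i_m\in\{1,\dots,N\}^m$ write $S_{i_1\dots i_m}=S_{i_1}\circ\cdots\circ S_{i_m}$. Order the words of length $m$ lexicographically (with $1\prec\cdots\prec N$); two words of length $m$ are adjacent if they are consecutive in this order. The ordered IFS is a linear IFS if $S_\omega(K)\cap S_\gamma(K)\neq\emptyset$ for every $m\ge1$ and every pair of adjacent words $\omega,\gamma$ of length $m$. *)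

theory Defs
  imports "HOL-Analysis.Analysis"
begin

definition contracting_similitude :: "('a::metric_space \<Rightarrow> 'a) \<Rightarrow> bool" where
  "contracting_similitude f \<longleftrightarrow>
     (\<exists>r. 0 < r \<and> r < 1 \<and> (\<forall>x y. dist (f x) (f y) = r * dist x y))"

definition fixpt :: "('a \<Rightarrow> 'a) \<Rightarrow> 'a" where
  "fixpt f = (THE x. f x = x)"

definition words :: "nat \<Rightarrow> nat \<Rightarrow> nat list set" where
  "words N m = {w. length w = m \<and> set w \<subseteq> {1..N}}"

definition word_map :: "(nat \<Rightarrow> 'a \<Rightarrow> 'a) \<Rightarrow> nat list \<Rightarrow> 'a \<Rightarrow> 'a" where
  "word_map S w = foldr (\<lambda>i f. S i \<circ> f) w id"

definition adjacent_words :: "nat \<Rightarrow> nat \<Rightarrow> nat list \<Rightarrow> nat list \<Rightarrow> bool" where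
  "adjacent_words N m \<omega> \<gamma> \<longleftrightarrow>
     \<omega> \<in> words N m \<and> \<gamma> \<in> words N m \<and> (\<omega>, \<gamma>) \<in> lex less_than \<and>
     \<not> (\<exists>\<delta>\<in>words N m. (\<omega>, \<delta>) \<in> lex less_than \<and> (\<delta>, \<gamma>) \<in> lex less_than)"

text \<open>Linear IFS, relative to its invariant set K.\<close>
definition linear_ifs :: "(nat \<Rightarrow> 'a \<Rightarrow> 'a) \<Rightarrow> nat \<Rightarrow> 'a set \<Rightarrow> bool" where
  "linear_ifs S N K \<longleftrightarrow>
     (\<forall>m\<ge>1. \<forall>\<omega> \<gamma>. adjacent_words N m \<omega> \<gamma> \<longrightarrow>
        word_map S \<omega> ` K \<inter> word_map S \<gamma> ` K \<noteq> {})"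

end

theory Submission
  imports Defs
begin

text \<open>
  Two words of length m are adjacent exactly when they have the form u a N^k and u (a+1) 1^k.
  Since Fix S_1 and Fix S_N lie in K and are fixed by S_1^k and S_N^k, the condition
  S_{a+1}(Fix S_1) = S_a(Fix S_N) makes S_u S_a S_N^k (Fix S_N) = S_u S_{a+1} S_1^k (Fix S_1) a common
  point of the two cylinders. Conversely, S_N^k(K) and S_1^k(K) shrink to Fix S_N and Fix S_1, so if
  the cylinders S_a S_N^k(K) and S_{a+1} S_1^k(K) meet for every k, then S_a(Fix S_N) and
  S_{a+1}(Fix S_1) are arbitrarily close.
\<close>

lemma word_map_Nil [simp]: "word_map S [] = id"
  by (simp add: word_map_def)

lemma word_map_Cons [simp]: "word_map S (a # w) = S a \<circ> word_map S w"
  by (simp add: word_map_def)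

lemma word_map_append: "word_map S (u @ v) = word_map S u \<circ> word_map S v"
  by (induct u) auto

lemma word_map_replicate [simp]: "word_map S (replicate k j) = S j ^^ k"
  by (induct k) auto

lemma funpow_fixed_point: "f p = p \<Longrightarrow> (f ^^ k) p = p"
  by (induct k) auto

lemma replicate_max_not_lex:
  "set v \<subseteq> {1..N} \<Longrightarrow> (replicate k N, v) \<notin> lex less_than"
proof (induct v arbitrary: k)
  case (Cons a v)
  then show ?case by (cases k) auto
qed simp

lemma replicate_min_not_lex:
  "set v \<subseteq> {1..N} \<Longrightarrow> (v, replicate k 1) \<notin> lex less_than"
proof (induct v arbitrary: k)
  case (Cons a v)
  then show ?case by (cases k) auto
qed simp

lemma lex_replicate_max:
  "set v \<subseteq> {1..N} \<Longrightarrow> v \<noteq> replicate (length v) N \<Longrightarrow> (v, replicate (length v) N) \<in> lex less_than"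
  by (induct v) auto

lemma lex_replicate_min:
  "set v \<subseteq> {1..N} \<Longrightarrow> v \<noteq> replicate (length v) 1 \<Longrightarrow> (replicate (length v) 1, v) \<in> lex less_than"
  by (induct v) (auto simp: Suc_le_eq)

lemma no_word_between_adjacent:
  assumes "set \<delta> \<subseteq> {1..N}"
    and "(u @ a # replicate k N, \<delta>) \<in> lex less_than"
    and "(\<delta>, u @ (a + 1) # replicate k 1) \<in> lex less_than"
  shows False
  using assms
proof (induct u arbitrary: \<delta>)
  case Nil
  then obtain d t where "\<delta> = d # t" "set t \<subseteq> {1..N}"
    by (cases \<delta>) auto
  then show ?case
    using Nil replicate_max_not_lex[of t N k] replicate_min_not_lex[of t N k] by auto
next
  case (Cons c u)
  then obtain d t where "\<delta> = d # t" "set t \<subseteq> {1..N}"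
    by (cases \<delta>) auto
  then show ?case
    using Cons by auto
qed

lemma adjacent_words_iff:
  "adjacent_words N m \<omega> \<gamma> \<longleftrightarrow>
    (\<exists>u a k. set u \<subseteq> {1..N} \<and> a \<in> {1..N-1} \<and> m = length u + Suc k \<and>
       \<omega> = u @ a # replicate k N \<and> \<gamma> = u @ (a + 1) # replicate k 1)"
  (is "_ \<longleftrightarrow> ?shape")
proof
  assume "adjacent_words N m \<omega> \<gamma>"
  then have \<omega>: "\<omega> \<in> words N m" and \<gamma>: "\<gamma> \<in> words N m" and lex: "(\<omega>, \<gamma>) \<in> lex less_than"
    and between: "\<And>\<delta>. \<delta> \<in> words N m \<Longrightarrow> (\<omega>, \<delta>) \<in> lex less_than \<Longrightarrow> (\<delta>, \<gamma>) \<notin> lex less_than"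
    unfolding adjacent_words_def by blast+
  obtain u a b v w where dec: "\<omega> = u @ a # v" "\<gamma> = u @ b # w" "a < b"
    using lex unfolding lex_conv by auto
  define k where "k = length v"
  have "length w = k"
    using \<omega> \<gamma> dec unfolding words_def k_def by simp
  have letters: "set u \<subseteq> {1..N}" "a \<in> {1..N}" "b \<in> {1..N}" "set v \<subseteq> {1..N}" "set w \<subseteq> {1..N}"
    using \<omega> \<gamma> dec unfolding words_def by auto
  text \<open>Otherwise a word strictly between \<open>\<omega>\<close> and \<open>\<gamma>\<close> is obtained by changing \<open>v\<close>, \<open>w\<close> or \<open>b\<close>.\<close>
  have "v = replicate k N"
  proof (rule ccontr)
    assume "v \<noteq> replicate k N"
    then have "(\<omega>, u @ a # replicate k N) \<in> lex less_than"
      using lex_replicate_max[of v N] letters unfolding dec k_def by (simp add: lex_append_leftI)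
    moreover have "(u @ a # replicate k N, \<gamma>) \<in> lex less_than"
      using dec \<open>length w = k\<close> by (simp add: lex_append_leftI)
    moreover have "u @ a # replicate k N \<in> words N m"
      using \<omega> letters unfolding words_def dec k_def by auto
    ultimately show False
      using between by blast
  qed
  moreover have "w = replicate k 1"
  proof (rule ccontr)
    assume "w \<noteq> replicate k 1"
    then have "(u @ b # replicate k 1, \<gamma>) \<in> lex less_than"
      using lex_replicate_min[of w N] letters \<open>length w = k\<close> unfolding dec
      by (simp add: lex_append_leftI)
    moreover have "(\<omega>, u @ b # replicate k 1) \<in> lex less_than"
      using dec k_def by (simp add: lex_append_leftI)
    moreover have "u @ b # replicate k 1 \<in> words N m"
      using \<gamma> letters \<open>length w = k\<close> unfolding words_def dec by auto
    ultimately show False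
      using between by blast
  qed
  moreover have "b = a + 1"
  proof (rule ccontr)
    assume "b \<noteq> a + 1"
    then have "(\<omega>, u @ (a + 1) # v) \<in> lex less_than" "(u @ (a + 1) # v, \<gamma>) \<in> lex less_than"
      using dec \<open>length w = k\<close> k_def by (simp_all add: lex_append_leftI)
    moreover have "u @ (a + 1) # v \<in> words N m"
      using \<omega> letters dec \<open>b \<noteq> a + 1\<close> unfolding words_def by auto
    ultimately show False
      using between by blast
  qed
  moreover have "m = length u + Suc k"
    using \<omega> dec unfolding words_def k_def by simp
  ultimately show ?shape
    using dec letters by (intro exI[of _ u] exI[of _ a] exI[of _ k]) auto
next
  assume ?shape
  then obtain u a k where "set u \<subseteq> {1..N}" "a \<in> {1..N-1}" "m = length u + Suc k"
    "\<omega> = u @ a # replicate k N" "\<gamma> = u @ (a + 1) # replicate k 1"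
    by blast
  then show "adjacent_words N m \<omega> \<gamma>"
    unfolding adjacent_words_def words_def
    using no_word_between_adjacent[of _ N u a k] by (auto simp: lex_append_leftI)
qed

lemma contracting_similitudeE:
  assumes "contracting_similitude f"
  obtains r where "0 < r" "r < 1" "\<And>x y. dist (f x) (f y) = r * dist x y"
  using assms unfolding contracting_similitude_def by blast

lemma contracting_similitude_dist_le:
  "contracting_similitude f \<Longrightarrow> dist (f x) (f y) \<le> dist x y"
  by (erule contracting_similitudeE) (simp add: mult_left_le_one_le)

lemma dist_funpow_similitude:
  fixes f :: "'a::metric_space \<Rightarrow> 'a"
  assumes "\<And>x y. dist (f x) (f y) = r * dist x y"
  shows "dist ((f ^^ k) x) ((f ^^ k) y) = r ^ k * dist x y"
  using assms by (induct k) auto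

lemma contracting_similitude_fixpt:
  fixes f :: "'a::metric_space \<Rightarrow> 'a"
  assumes "contracting_similitude f" "complete K" "K \<noteq> {}" "f ` K \<subseteq> K"
  shows "f (fixpt f) = fixpt f" "fixpt f \<in> K"
proof -
  obtain r where r: "0 < r" "r < 1" "\<And>x y. dist (f x) (f y) = r * dist x y"
    using assms(1) by (rule contracting_similitudeE) auto
  have "\<exists>!p\<in>K. f p = p"
    by (rule Banach_fix[OF assms(2,3) _ r(2) assms(4)]) (use r in auto)
  then obtain p where p: "p \<in> K" "f p = p"
    by blast
  have "q = p" if "f q = q" for q
  proof -
    have "dist q p = r * dist q p"
      using r(3)[of q p] that p(2) by simp
    then show ?thesis
      using r(2) by (simp add: mult_le_cancel_right1)
  qed
  then have "fixpt f = p"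
    unfolding fixpt_def using p(2) by blast
  then show "f (fixpt f) = fixpt f" "fixpt f \<in> K"
    using p by simp_all
qed

lemma contracting_similitude_funpow_uniformly_close:
  fixes f :: "'a::metric_space \<Rightarrow> 'a"
  assumes "contracting_similitude f" "f p = p" "bounded K" "0 < \<epsilon>"
  shows "\<forall>\<^sub>F k in sequentially. \<forall>x\<in>K. dist ((f ^^ k) x) p < \<epsilon>"
proof -
  obtain r where r: "0 < r" "r < 1" "\<And>x y. dist (f x) (f y) = r * dist x y"
    using assms(1) by (rule contracting_similitudeE) auto
  obtain D where D: "\<And>x. x \<in> K \<Longrightarrow> dist x p \<le> D"
    using bounded_any_center[of K p] assms(3) by (auto simp: dist_commute)
  have "(\<lambda>k. r ^ k * D) \<longlonglongrightarrow> 0"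
    using r by (intro tendsto_mult_left_zero LIMSEQ_power_zero) simp
  then have "\<forall>\<^sub>F k in sequentially. r ^ k * D < \<epsilon>"
    using assms(4) by (rule order_tendstoD)
  then show ?thesis
  proof eventually_elim
    case (elim k)
    have "dist ((f ^^ k) x) p \<le> r ^ k * D" if "x \<in> K" for x
    proof -
      have "dist ((f ^^ k) x) p = r ^ k * dist x p"
        using dist_funpow_similitude[of f r k x p, OF r(3)] funpow_fixed_point[of f p k] assms(2) by simp
      also have "\<dots> \<le> r ^ k * D"
        using D[OF that] r(1) by (simp add: mult_left_mono)
      finally show ?thesis .
    qed
    then show ?case
      using elim by (meson le_less_trans)
  qed
qed

lemma linear_ifs_if_fixpt_condition:
  assumes "\<forall>i\<in>{1..N-1}. S (i + 1) p = S i q" "S 1 p = p" "S N q = q" "p \<in> K" "q \<in> K"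
  shows "linear_ifs S N K"
  unfolding linear_ifs_def
proof (intro allI impI)
  fix m \<omega> \<gamma>
  assume "adjacent_words N m \<omega> \<gamma>"
  then obtain u a k where "a \<in> {1..N-1}" "\<omega> = u @ a # replicate k N" "\<gamma> = u @ (a + 1) # replicate k 1"
    by (auto simp: adjacent_words_iff)
  then have "word_map S \<omega> q = word_map S \<gamma> p"
    using assms(1-3) by (simp add: word_map_append funpow_fixed_point)
  then show "word_map S \<omega> ` K \<inter> word_map S \<gamma> ` K \<noteq> {}"
    using assms(4,5) by blast
qed

lemma fixpt_condition_if_linear_ifs:
  fixes S :: "nat \<Rightarrow> 'a::metric_space \<Rightarrow> 'a"
  assumes linear: "linear_ifs S N K"
    and similitudes: "\<forall>j\<in>{1..N}. contracting_similitude (S j)"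
    and "bounded K" "S 1 p = p" "S N q = q"
    and i: "i \<in> {1..N-1}"
  shows "S (i + 1) p = S i q"
proof (rule ccontr)
  define e where "e = dist (S (i + 1) p) (S i q)"
  assume "S (i + 1) p \<noteq> S i q"
  then have "0 < e"
    unfolding e_def by simp
  have "\<forall>\<^sub>F k in sequentially. (\<forall>x\<in>K. dist ((S N ^^ k) x) q < e / 2) \<and> (\<forall>y\<in>K. dist ((S 1 ^^ k) y) p < e / 2)"
    using assms(3-5) i similitudes \<open>0 < e\<close>
    by (intro eventually_conj contracting_similitude_funpow_uniformly_close) auto
  then obtain k where
    close_N: "\<forall>x\<in>K. dist ((S N ^^ k) x) q < e / 2" and
    close_1: "\<forall>y\<in>K. dist ((S 1 ^^ k) y) p < e / 2"
    unfolding eventually_sequentially by blast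
  have "adjacent_words N (Suc k) (i # replicate k N) ((i + 1) # replicate k 1)"
    unfolding adjacent_words_iff using i by (intro exI[of _ "[]"] exI[of _ i] exI[of _ k]) auto
  then obtain x y where "x \<in> K" "y \<in> K" and meet: "S i ((S N ^^ k) x) = S (i + 1) ((S 1 ^^ k) y)"
    using linear unfolding linear_ifs_def by fastforce
  have "e \<le> dist (S (i + 1) ((S 1 ^^ k) y)) (S (i + 1) p) + dist (S i ((S N ^^ k) x)) (S i q)"
    unfolding e_def meet by (rule dist_triangle3)
  also have "\<dots> \<le> dist ((S 1 ^^ k) y) p + dist ((S N ^^ k) x) q"
    using i similitudes by (intro add_mono contracting_similitude_dist_le) auto
  also have "\<dots> < e"
    using close_1 close_N \<open>x \<in> K\<close> \<open>y \<in> K\<close> by fastforce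
  finally show False
    by simp
qed

theorem corollary4p2:
  fixes S :: "nat \<Rightarrow> 'a::euclidean_space \<Rightarrow> 'a" and N :: nat and K :: "'a set"
  assumes "N \<ge> 1"
    and "\<forall>j\<in>{1..N}. contracting_similitude (S j)"
    and "compact K" and "K \<noteq> {}" and "K = (\<Union>j\<in>{1..N}. S j ` K)"
  shows "linear_ifs S N K \<longleftrightarrow>
         (\<forall>i\<in>{1..N-1}. S (i+1) (fixpt (S 1)) = S i (fixpt (S N)))"
proof -
  have "S j (fixpt (S j)) = fixpt (S j) \<and> fixpt (S j) \<in> K" if "j \<in> {1..N}" for j
    using contracting_similitude_fixpt[OF _ compact_imp_complete[OF assms(3)] assms(4)]
      assms(2,5) that by blast
  then have "S 1 (fixpt (S 1)) = fixpt (S 1)" "fixpt (S 1) \<in> K"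
    and "S N (fixpt (S N)) = fixpt (S N)" "fixpt (S N) \<in> K"
    using assms(1) by auto
  then show ?thesis
    using fixpt_condition_if_linear_ifs[OF _ assms(2) compact_imp_bounded[OF assms(3)]]
      linear_ifs_if_fixpt_condition[of N S]
    by blast
qed

end
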